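(* Almost every $n$-vertex graph can be reconstructed (up to isomorphism) from its induced subgraphs with $3\log_2 n$ vertices; i.e. for almost every $n$-vertex graph $G$, any $n$-vertex graph $G'$ whose multiset of $3\log_2 n$-vertex induced subgraphs equals that of $G$ is isomorphic to $G$.
   Context: Graphs are finite, simple, undirected; all subgraphs are induced subgraphs, and the multiset of subgraphs records each isomorphism type with its multiplicity. "Almost every $n$-vertex graph has property $Q$" means: in the random graph on $n$ labeled vertices where each edge is present independently with probability $1/2$, the probability of $Q$ tends to $1$ as $n\to\infty$. *)

theory Defs
  imports Complex_Main "HOL-Library.Multiset"
begin

text \<open>A finite simple graph is a pair (vertex set, edge set), edges being 2-element
  vertex sets.  Labeled graphs on n vertices have vertex set {0..<n} and are
  identified with their edge sets.\<close>

type_synonym graph = "nat set \<times> nat set set"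

definition graphs_on :: "nat \<Rightarrow> nat set set set" where
  "graphs_on n = {E. E \<subseteq> {e. e \<subseteq> {0..<n} \<and> card e = 2}}"

definition induced :: "nat set set \<Rightarrow> nat set \<Rightarrow> graph" where
  "induced E S = (S, {e \<in> E. e \<subseteq> S})"

definition graph_iso :: "graph \<Rightarrow> graph \<Rightarrow> bool" where
  "graph_iso G H \<longleftrightarrow> (\<exists>f. bij_betw f (fst G) (fst H) \<and>
     (\<forall>u\<in>fst G. \<forall>v\<in>fst G. {u, v} \<in> snd G \<longleftrightarrow> {f u, f v} \<in> snd H))"

definition iso_class :: "graph \<Rightarrow> graph set" where
  "iso_class G = {H. graph_iso G H}"

definition deck :: "nat \<Rightarrow> nat \<Rightarrow> nat set set \<Rightarrow> graph set multiset" where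
  "deck n k E = image_mset (\<lambda>S. iso_class (induced E S))
                  (mset_set {S. S \<subseteq> {0..<n} \<and> card S = k})"

definition reconstructible :: "nat \<Rightarrow> nat \<Rightarrow> nat set set \<Rightarrow> bool" where
  "reconstructible n k E \<longleftrightarrow>
     (\<forall>E' \<in> graphs_on n. deck n k E' = deck n k E \<longrightarrow> graph_iso ({0..<n}, E') ({0..<n}, E))"

end

theory Submission
  imports Defs "HOL-Library.FuncSet" "HOL-Real_Asymp.Real_Asymp"
begin

text \<open>Let \<open>a = k - 2\<close> and \<open>A = {0..<a}\<close>. Suppose \<open>A\<close> is rigid in \<open>G\<close> (the identity is the
  only injection of \<open>A\<close> into the vertex set that preserves adjacency and non-adjacency on \<open>A\<close>)
  and distinguishing (the vertices outside \<open>A\<close> have pairwise different neighbourhoods in \<open>A\<close>).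
  If \<open>G'\<close> has the same \<open>k\<close>-deck, Kelly's lemma gives \<open>G'\<close> exactly one induced copy \<open>A'\<close> of
  \<open>G[A]\<close>. Each card \<open>G[A \<union> {v, w}]\<close> occurs in \<open>G'\<close>, and by rigidity the isomorphism can be
  taken to agree with \<open>A \<cong> A'\<close>; it therefore sends \<open>v\<close> and \<open>w\<close> to the vertices of \<open>G'\<close> with the
  same neighbourhood in \<open>A'\<close>, and these local maps glue to an isomorphism \<open>G \<cong> G'\<close>.

  If \<open>\<psi>\<close> preserves adjacency on \<open>A\<close> and \<open>Q\<close> is a set of pairs in \<open>A\<close> disjoint from its
  image under \<open>\<psi>\<close>, the adjacency of each \<open>\<psi> ` q\<close> (\<open>q \<in> Q\<close>) is forced, which happens for a
  fraction \<open>2^(-|Q|)\<close> of all graphs. Choosing \<open>Q\<close> large and summing over all injections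
  \<open>\<psi> \<noteq> id\<close> (the sum factorises over the points of \<open>A\<close>) shows that \<open>A\<close> fails to be rigid for a
  fraction at most \<open>(1 + a 2^(-a/80) + n 2^(-2(a-1)/5 - a/80))^a - 1\<close> of all graphs; it fails
  to be distinguishing for a fraction at most \<open>n\<^sup>2 2^(-a)\<close>. Both vanish for \<open>a \<approx> 3 log\<^sub>2 n\<close>.\<close>

section \<open>Graph isomorphism and Kelly's lemma\<close>

lemma graph_iso_refl: "graph_iso G G"
  unfolding graph_iso_def by (intro exI[of _ id]) auto

lemma graph_iso_sym:
  assumes "graph_iso G H"
  shows "graph_iso H G"
proof -
  obtain f where f: "bij_betw f (fst G) (fst H)"
    and adj: "\<forall>u\<in>fst G. \<forall>v\<in>fst G. {u, v} \<in> snd G \<longleftrightarrow> {f u, f v} \<in> snd H"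
    using assms unfolding graph_iso_def by blast
  let ?g = "inv_into (fst G) f"
  have g: "bij_betw ?g (fst H) (fst G)"
    using f by (rule bij_betw_inv_into)
  have inv: "?g u \<in> fst G" "f (?g u) = u" if "u \<in> fst H" for u
    using that f g by (auto intro: bij_betw_apply bij_betw_inv_into_right)
  have "{u, v} \<in> snd H \<longleftrightarrow> {?g u, ?g v} \<in> snd G" if "u \<in> fst H" "v \<in> fst H" for u v
    using adj[rule_format, OF inv(1)[OF that(1)] inv(1)[OF that(2)]] inv(2)[OF that(1)] inv(2)[OF that(2)]
    by simp
  then show ?thesis
    using g unfolding graph_iso_def by blast
qed

lemma graph_iso_trans:
  assumes "graph_iso G H" and "graph_iso H K"
  shows "graph_iso G K"
proof -
  obtain f where f: "bij_betw f (fst G) (fst H)"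
    and adj_f: "\<forall>u\<in>fst G. \<forall>v\<in>fst G. {u, v} \<in> snd G \<longleftrightarrow> {f u, f v} \<in> snd H"
    using assms(1) unfolding graph_iso_def by blast
  obtain g where g: "bij_betw g (fst H) (fst K)"
    and adj_g: "\<forall>u\<in>fst H. \<forall>v\<in>fst H. {u, v} \<in> snd H \<longleftrightarrow> {g u, g v} \<in> snd K"
    using assms(2) unfolding graph_iso_def by blast
  have "\<forall>u\<in>fst G. \<forall>v\<in>fst G. {u, v} \<in> snd G \<longleftrightarrow> {(g \<circ> f) u, (g \<circ> f) v} \<in> snd K"
    using adj_f adj_g bij_betw_apply[OF f] by simp
  then show ?thesis
    using bij_betw_trans[OF f g] unfolding graph_iso_def by blast
qed

lemma iso_class_eq_iff: "iso_class G = iso_class H \<longleftrightarrow> graph_iso G H"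
proof
  assume "iso_class G = iso_class H"
  then have "H \<in> iso_class G"
    using graph_iso_refl[of H] by (simp add: iso_class_def)
  then show "graph_iso G H"
    by (simp add: iso_class_def)
next
  assume "graph_iso G H"
  then show "iso_class G = iso_class H"
    unfolding iso_class_def using graph_iso_sym graph_iso_trans by blast
qed

lemma graph_iso_induced_iff:
  "graph_iso (induced E S) (induced E' S') \<longleftrightarrow>
     (\<exists>g. bij_betw g S S' \<and> (\<forall>u\<in>S. \<forall>v\<in>S. {u, v} \<in> E \<longleftrightarrow> {g u, g v} \<in> E'))"
proof -
  have "({u, v} \<in> {e \<in> E. e \<subseteq> S} \<longleftrightarrow> {g u, g v} \<in> {e \<in> E'. e \<subseteq> S'}) \<longleftrightarrow>
        ({u, v} \<in> E \<longleftrightarrow> {g u, g v} \<in> E')"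
    if "bij_betw g S S'" "u \<in> S" "v \<in> S" for g u v
    using that bij_betw_apply[OF that(1)] by simp
  then show ?thesis
    unfolding graph_iso_def induced_def fst_conv snd_conv by (metis (no_types, lifting))
qed

definition induced_copies :: "nat \<Rightarrow> graph set \<Rightarrow> graph \<Rightarrow> nat set set" where
  "induced_copies l C G = {T. T \<subseteq> fst G \<and> card T = l \<and> iso_class (induced (snd G) T) = C}"

lemma finite_induced_copies: "finite (fst G) \<Longrightarrow> finite (induced_copies l C G)"
  unfolding induced_copies_def by (rule finite_subset[of _ "Pow (fst G)"]) auto

lemma card_induced_copies_le:
  assumes iso: "graph_iso G H" and fin: "finite (fst G)"
  shows "card (induced_copies l C G) \<le> card (induced_copies l C H)"
proof -
  obtain f where f: "bij_betw f (fst G) (fst H)"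
    and adj: "\<forall>u\<in>fst G. \<forall>v\<in>fst G. {u, v} \<in> snd G \<longleftrightarrow> {f u, f v} \<in> snd H"
    using iso unfolding graph_iso_def by blast
  have inj: "inj_on f (fst G)"
    using f by (rule bij_betw_imp_inj_on)
  have "f ` T \<in> induced_copies l C H" if T: "T \<in> induced_copies l C G" for T
  proof -
    have T_sub: "T \<subseteq> fst G" and "card T = l" and T_class: "iso_class (induced (snd G) T) = C"
      using T by (auto simp: induced_copies_def)
    have inj_T: "inj_on f T"
      using inj T_sub by (rule inj_on_subset)
    have "graph_iso (induced (snd G) T) (induced (snd H) (f ` T))"
      unfolding graph_iso_induced_iff using inj_T adj T_sub
      by (intro exI[of _ f]) (auto simp: bij_betw_def)
    then have "iso_class (induced (snd H) (f ` T)) = C"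
      using T_class iso_class_eq_iff by metis
    moreover have "f ` T \<subseteq> fst H"
      using T_sub f bij_betw_imp_surj_on by blast
    ultimately show ?thesis
      using card_image[OF inj_T] \<open>card T = l\<close> by (simp add: induced_copies_def)
  qed
  moreover have "inj_on (image f) (induced_copies l C G)"
    by (rule inj_on_subset[OF inj_on_image_Pow[OF inj]]) (auto simp: induced_copies_def)
  moreover have "finite (fst H)"
    using fin f bij_betw_finite by blast
  ultimately show ?thesis
    by (intro card_inj_on_le[of "image f"]) (auto intro: finite_induced_copies)
qed

lemma card_induced_copies_iso:
  "graph_iso G H \<Longrightarrow> finite (fst G) \<Longrightarrow> card (induced_copies l C G) = card (induced_copies l C H)"
  by (meson antisym card_induced_copies_le graph_iso_sym graph_iso_def bij_betw_finite)

text \<open>By \<open>card_induced_copies_iso\<close> this does not depend on the representative chosen by \<open>SOME\<close>.\<close>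
definition class_copies :: "nat \<Rightarrow> graph set \<Rightarrow> graph set \<Rightarrow> nat" where
  "class_copies l C X = card (induced_copies l C (SOME G. G \<in> X))"

lemma class_copies_induced:
  assumes "finite S"
  shows "class_copies l C (iso_class (induced E S)) = card {T \<in> induced_copies l C (UNIV, E). T \<subseteq> S}"
proof -
  let ?G = "SOME G. G \<in> iso_class (induced E S)"
  have "graph_iso (induced E S) ?G"
    using someI[of "\<lambda>G. G \<in> iso_class (induced E S)" "induced E S"] graph_iso_refl
    by (simp add: iso_class_def)
  then have "class_copies l C (iso_class (induced E S)) = card (induced_copies l C (induced E S))"
    unfolding class_copies_def using card_induced_copies_iso assms by (simp add: induced_def)
  also have "induced_copies l C (induced E S) = {T \<in> induced_copies l C (UNIV, E). T \<subseteq> S}"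
  proof -
    have "induced {e \<in> E. e \<subseteq> S} T = induced E T" if "T \<subseteq> S" for T
      using that unfolding induced_def by auto
    then show ?thesis
      unfolding induced_copies_def by (auto simp: induced_def)
  qed
  finally show ?thesis .
qed

lemma card_supersets:
  assumes "T \<subseteq> U" and "finite U" and "l \<le> k" and "card T = l"
  shows "card {S. S \<subseteq> U \<and> card S = k \<and> T \<subseteq> S} = (card U - l) choose (k - l)"
proof -
  have fin_T: "finite T"
    using assms finite_subset by blast
  have "bij_betw (\<lambda>S. S - T) {S. S \<subseteq> U \<and> card S = k \<and> T \<subseteq> S} {V. V \<subseteq> U - T \<and> card V = k - l}"
  proof (rule bij_betwI[where g = "\<lambda>V. V \<union> T"])
    show "(\<lambda>V. V \<union> T) \<in> {V. V \<subseteq> U - T \<and> card V = k - l} \<rightarrow> {S. S \<subseteq> U \<and> card S = k \<and> T \<subseteq> S}"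
    proof
      fix V assume V: "V \<in> {V. V \<subseteq> U - T \<and> card V = k - l}"
      then have "card (V \<union> T) = card V + card T"
        using assms fin_T by (intro card_Un_disjoint) (auto intro: finite_subset)
      then show "V \<union> T \<in> {S. S \<subseteq> U \<and> card S = k \<and> T \<subseteq> S}"
        using V assms by auto
    qed
  qed (use assms fin_T in \<open>auto simp: card_Diff_subset\<close>)
  then have "card {S. S \<subseteq> U \<and> card S = k \<and> T \<subseteq> S} = card (U - T) choose (k - l)"
    using assms by (simp add: bij_betw_same_card n_subsets)
  then show ?thesis
    using assms fin_T by (simp add: card_Diff_subset)
qed

text \<open>Double counting of pairs (card, copy of \<open>C\<close> inside it).\<close>
lemma sum_deck_class_copies:
  assumes "l \<le> k"
  shows "sum_mset (image_mset (class_copies l C) (deck n k E))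
           = card (induced_copies l C ({0..<n}, E)) * ((n - l) choose (k - l))"
proof -
  let ?K = "{S. S \<subseteq> {0..<n} \<and> card S = k}"
  let ?F = "induced_copies l C ({0..<n}, E)"
  have fin_K: "finite ?K"
    by (rule finite_subset[of _ "Pow {0..<n}"]) auto
  have fin_F: "finite ?F"
    by (rule finite_induced_copies) simp
  have "sum_mset (image_mset (class_copies l C) (deck n k E))
      = (\<Sum>S\<in>?K. class_copies l C (iso_class (induced E S)))"
    unfolding deck_def sum_unfold_sum_mset by (simp add: image_mset.compositionality o_def)
  also have "\<dots> = (\<Sum>S\<in>?K. card {T \<in> ?F. T \<subseteq> S})"
  proof (rule sum.cong[OF refl])
    fix S assume "S \<in> ?K"
    then have "finite S" and "{T \<in> induced_copies l C (UNIV, E). T \<subseteq> S} = {T \<in> ?F. T \<subseteq> S}"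
      by (auto simp: induced_copies_def finite_subset)
    then show "class_copies l C (iso_class (induced E S)) = card {T \<in> ?F. T \<subseteq> S}"
      by (simp add: class_copies_induced)
  qed
  also have "\<dots> = (\<Sum>S\<in>?K. \<Sum>T\<in>?F. if T \<subseteq> S then 1 else 0)"
    using fin_F by (simp add: sum.If_cases Int_def)
  also have "\<dots> = (\<Sum>T\<in>?F. \<Sum>S\<in>?K. if T \<subseteq> S then 1 else 0)"
    by (rule sum.swap)
  also have "\<dots> = (\<Sum>T\<in>?F. card {S \<in> ?K. T \<subseteq> S})"
    using fin_K by (simp add: sum.If_cases Int_def)
  also have "\<dots> = (\<Sum>T\<in>?F. (n - l) choose (k - l))"
  proof (rule sum.cong[OF refl])
    fix T assume "T \<in> ?F"
    then have "card {S. S \<subseteq> {0..<n} \<and> card S = k \<and> T \<subseteq> S} = (n - l) choose (k - l)"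
      using assms card_supersets[of T "{0..<n}" l k] by (simp add: induced_copies_def)
    then show "card {S \<in> ?K. T \<subseteq> S} = (n - l) choose (k - l)"
      by (simp add: conj_assoc)
  qed
  finally show ?thesis
    by simp
qed

lemma kelly_lemma:
  assumes "deck n k E = deck n k E'" and "l \<le> k" and "k \<le> n"
  shows "card (induced_copies l C ({0..<n}, E)) = card (induced_copies l C ({0..<n}, E'))"
proof -
  have "card (induced_copies l C ({0..<n}, E)) * ((n - l) choose (k - l))
      = card (induced_copies l C ({0..<n}, E')) * ((n - l) choose (k - l))"
    using sum_deck_class_copies[of l k C n] assms by metis
  moreover have "(n - l) choose (k - l) > 0"
    using assms by simp
  ultimately show ?thesis
    by simp
qed

section \<open>Reconstruction from a rigid distinguishing set\<close>

definition preserves_adj :: "nat set set \<Rightarrow> nat set \<Rightarrow> (nat \<Rightarrow> nat) \<Rightarrow> bool" where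
  "preserves_adj E A \<psi> \<longleftrightarrow> (\<forall>u\<in>A. \<forall>v\<in>A. u \<noteq> v \<longrightarrow> ({u, v} \<in> E \<longleftrightarrow> {\<psi> u, \<psi> v} \<in> E))"

definition rigid :: "nat \<Rightarrow> nat set set \<Rightarrow> nat set \<Rightarrow> bool" where
  "rigid n E A \<longleftrightarrow>
     (\<forall>\<psi>. \<psi> ` A \<subseteq> {0..<n} \<and> inj_on \<psi> A \<and> preserves_adj E A \<psi> \<longrightarrow> (\<forall>u\<in>A. \<psi> u = u))"

definition nbrs_in :: "nat set set \<Rightarrow> nat set \<Rightarrow> nat \<Rightarrow> nat set" where
  "nbrs_in E A v = {u \<in> A. {u, v} \<in> E}"

definition distinguishing :: "nat \<Rightarrow> nat set set \<Rightarrow> nat set \<Rightarrow> bool" where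
  "distinguishing n E A \<longleftrightarrow> inj_on (nbrs_in E A) ({0..<n} - A)"

lemma rigid_unique_copy:
  assumes "A \<subseteq> {0..<n}" and "rigid n E A"
  shows "induced_copies (card A) (iso_class (induced E A)) ({0..<n}, E) = {A}"
proof
  show "{A} \<subseteq> induced_copies (card A) (iso_class (induced E A)) ({0..<n}, E)"
    using assms(1) by (simp add: induced_copies_def)
  show "induced_copies (card A) (iso_class (induced E A)) ({0..<n}, E) \<subseteq> {A}"
  proof
    fix T assume "T \<in> induced_copies (card A) (iso_class (induced E A)) ({0..<n}, E)"
    then have T: "T \<subseteq> {0..<n}" and "graph_iso (induced E A) (induced E T)"
      by (auto simp: induced_copies_def iso_class_eq_iff[symmetric])
    then obtain g where g: "bij_betw g A T" and adj: "\<forall>u\<in>A. \<forall>v\<in>A. {u, v} \<in> E \<longleftrightarrow> {g u, g v} \<in> E"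
      unfolding graph_iso_induced_iff by blast
    have "g ` A \<subseteq> {0..<n}" and "inj_on g A" and "preserves_adj E A g"
      using g T adj unfolding bij_betw_def preserves_adj_def by auto
    then have "\<forall>u\<in>A. g u = u"
      using assms(2) unfolding rigid_def by blast
    then show "T \<in> {A}"
      using g unfolding bij_betw_def by auto
  qed
qed

lemma inj_on_image_eq_if_covers:
  assumes "finite Y" and "card X = card Y" and "inj_on c X" and "c ` X \<subseteq> d ` Y"
  shows "inj_on d Y" and "d ` Y = c ` X"
proof -
  have "card (c ` X) \<le> card (d ` Y)"
    using assms(1,4) by (intro card_mono) auto
  then have card_eq: "card (c ` X) = card (d ` Y)" and "card (d ` Y) = card Y"
    using card_image[OF assms(3)] card_image_le[OF assms(1), of d] assms(2) by linarith+
  then show "inj_on d Y"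
    using assms(1) by (rule_tac eq_card_imp_inj_on) auto
  show "d ` Y = c ` X"
    using card_subset_eq[OF finite_imageI[OF assms(1)] assms(4) card_eq] by simp
qed

lemma rigid_copy_iso_unique:
  assumes rigid: "rigid n E A" and A: "A \<subseteq> {0..<n}"
    and \<phi>: "bij_betw \<phi> A A'" "\<forall>u\<in>A. \<forall>v\<in>A. {u, v} \<in> E \<longleftrightarrow> {\<phi> u, \<phi> v} \<in> E'"
    and g: "bij_betw g A A'" "\<forall>u\<in>A. \<forall>v\<in>A. {u, v} \<in> E \<longleftrightarrow> {g u, g v} \<in> E'"
  shows "\<forall>u\<in>A. g u = \<phi> u"
proof -
  define \<psi> where "\<psi> = inv_into A \<phi> \<circ> g"
  have \<psi>: "\<psi> u \<in> A" "\<phi> (\<psi> u) = g u" if "u \<in> A" for u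
  proof -
    have "g u \<in> \<phi> ` A"
      using g(1) \<phi>(1) that by (auto simp: bij_betw_def)
    then show "\<psi> u \<in> A" "\<phi> (\<psi> u) = g u"
      unfolding \<psi>_def by (auto intro: inv_into_into f_inv_into_f)
  qed
  have "\<psi> ` A \<subseteq> {0..<n}"
    using \<psi>(1) A by auto
  moreover have "inj_on \<psi> A"
  proof (rule inj_onI)
    fix u v assume "u \<in> A" "v \<in> A" "\<psi> u = \<psi> v"
    then have "g u = g v"
      using \<psi>(2) by metis
    then show "u = v"
      using inj_onD[OF bij_betw_imp_inj_on[OF g(1)]] \<open>u \<in> A\<close> \<open>v \<in> A\<close> by blast
  qed
  moreover have "preserves_adj E A \<psi>"
    unfolding preserves_adj_def
  proof (intro ballI impI)
    fix u v assume "u \<in> A" "v \<in> A"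
    then have "{\<psi> u, \<psi> v} \<in> E \<longleftrightarrow> {g u, g v} \<in> E'"
      using \<phi>(2) \<psi> by simp
    then show "{u, v} \<in> E \<longleftrightarrow> {\<psi> u, \<psi> v} \<in> E"
      using g(2) \<open>u \<in> A\<close> \<open>v \<in> A\<close> by simp
  qed
  ultimately have "\<forall>u\<in>A. \<psi> u = u"
    using rigid unfolding rigid_def by blast
  then show ?thesis
    using \<psi> by metis
qed

lemma same_deck_extends_copy_iso:
  assumes deck: "deck n k E' = deck n k E"
    and A: "A \<subseteq> {0..<n}" "rigid n E A"
    and A': "induced_copies (card A) (iso_class (induced E A)) ({0..<n}, E') = {A'}"
    and \<phi>: "bij_betw \<phi> A A'" "\<forall>u\<in>A. \<forall>v\<in>A. {u, v} \<in> E \<longleftrightarrow> {\<phi> u, \<phi> v} \<in> E'"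
    and S: "A \<subseteq> S" "S \<subseteq> {0..<n}" "card S = k"
  obtains g where "g ` (S - A) \<subseteq> {0..<n} - A'" and "\<forall>u\<in>A. g u = \<phi> u"
    and "\<forall>x\<in>S. \<forall>y\<in>S. {x, y} \<in> E \<longleftrightarrow> {g x, g y} \<in> E'"
proof -
  have fin: "finite {S. S \<subseteq> {0..<n} \<and> card S = k}"
    by (rule finite_subset[of _ "Pow {0..<n}"]) auto
  have "iso_class (induced E S) \<in> (\<lambda>S. iso_class (induced E S)) ` {S. S \<subseteq> {0..<n} \<and> card S = k}"
    using S by blast
  then have "iso_class (induced E S) \<in># deck n k E"
    unfolding deck_def in_image_mset finite_set_mset_mset_set[OF fin] .
  then have "iso_class (induced E S) \<in># deck n k E'"
    by (simp only: deck)
  then obtain S' where S': "S' \<subseteq> {0..<n}" "iso_class (induced E' S') = iso_class (induced E S)"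
    unfolding deck_def in_image_mset finite_set_mset_mset_set[OF fin] by blast
  then have "graph_iso (induced E S) (induced E' S')"
    using iso_class_eq_iff by metis
  then obtain g where g: "bij_betw g S S'" and adj: "\<forall>x\<in>S. \<forall>y\<in>S. {x, y} \<in> E \<longleftrightarrow> {g x, g y} \<in> E'"
    unfolding graph_iso_induced_iff by blast
  have inj_S: "inj_on g S"
    using g by (rule bij_betw_imp_inj_on)
  then have inj_A: "inj_on g A"
    using S(1) by (rule inj_on_subset)
  have adj_A: "\<forall>u\<in>A. \<forall>v\<in>A. {u, v} \<in> E \<longleftrightarrow> {g u, g v} \<in> E'"
    using adj S(1) by (simp add: subset_iff)
  have "g ` A \<in> induced_copies (card A) (iso_class (induced E A)) ({0..<n}, E')"
  proof -
    have "graph_iso (induced E A) (induced E' (g ` A))"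
      unfolding graph_iso_induced_iff using inj_A adj_A by (intro exI[of _ g] conjI) (simp_all add: bij_betw_def)
    then have "iso_class (induced E' (g ` A)) = iso_class (induced E A)"
      using iso_class_eq_iff by metis
    moreover have "g ` A \<subseteq> {0..<n}"
      using image_mono[OF S(1), of g] bij_betw_imp_surj_on[OF g] S'(1) by simp
    ultimately show ?thesis
      by (simp add: induced_copies_def card_image[OF inj_A])
  qed
  then have gA: "g ` A = A'"
    using A' by simp
  then have "\<forall>u\<in>A. g u = \<phi> u"
    using rigid_copy_iso_unique[OF A(2,1) \<phi>, of g] inj_A adj_A by (simp add: bij_betw_def)
  moreover have "g ` (S - A) \<subseteq> {0..<n} - A'"
    using inj_on_image_set_diff[OF inj_S _ S(1)] gA g S'(1) by (auto simp: bij_betw_def)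
  ultimately show ?thesis
    using that adj by blast
qed

lemma exists_bij_matching_codes:
  assumes fin: "finite V" and A: "A \<subseteq> V" "A' \<subseteq> V" "card A' = card A"
    and \<phi>: "bij_betw \<phi> A A'"
    and c: "inj_on c (V - A)" "c ` (V - A) \<subseteq> d ` (V - A')"
  obtains f where "bij_betw f V V" and "\<forall>x\<in>A. f x = \<phi> x"
    and "\<forall>v\<in>V - A. f v \<in> V - A' \<and> d (f v) = c v"
proof -
  have card_out: "card (V - A') = card (V - A)"
    using A fin by (simp add: card_Diff_subset finite_subset)
  have d_img: "d ` (V - A') = c ` (V - A)"
    using inj_on_image_eq_if_covers[of "V - A'" "V - A" c d] fin card_out c by simp
  define f where "f x = (if x \<in> A then \<phi> x else inv_into (V - A') d (c x))" for x
  have f_out: "f v \<in> V - A' \<and> d (f v) = c v" if "v \<in> V - A" for v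
  proof -
    have "c v \<in> d ` (V - A')"
      using d_img that by blast
    then have "inv_into (V - A') d (c v) \<in> V - A'" and "d (inv_into (V - A') d (c v)) = c v"
      by (rule inv_into_into, rule f_inv_into_f)
    then show ?thesis
      using that by (simp add: f_def)
  qed
  have "inj_on f (V - A)"
  proof (rule inj_onI)
    fix v w assume "v \<in> V - A" "w \<in> V - A" "f v = f w"
    then show "v = w"
      using f_out inj_onD[OF c(1)] by metis
  qed
  then have "f ` (V - A) = V - A'"
    using f_out card_out fin by (intro card_subset_eq) (auto simp: card_image)
  moreover have "f ` A = A'"
    using \<phi> by (simp add: f_def bij_betw_def)
  ultimately have "f ` (A \<union> (V - A)) = A' \<union> (V - A')"
    by (simp only: image_Un)
  moreover have "A \<union> (V - A) = V" and "A' \<union> (V - A') = V"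
    using A(1,2) by auto
  ultimately have "f ` V = V"
    by simp
  then have "bij_betw f V V"
    using fin by (simp add: bij_betw_def eq_card_imp_inj_on)
  then show ?thesis
    using that f_out by (simp add: f_def)
qed

lemma graph_iso_if_bij_respects_nbrs:
  assumes E: "E \<in> graphs_on n" "E' \<in> graphs_on n"
    and f: "bij_betw f {0..<n} {0..<n}" "\<forall>x\<in>A. f x = \<phi> x"
    and \<phi>: "\<forall>u\<in>A. \<forall>v\<in>A. {u, v} \<in> E \<longleftrightarrow> {\<phi> u, \<phi> v} \<in> E'"
    and nbrs: "\<forall>v\<in>{0..<n} - A. {u \<in> A. {\<phi> u, f v} \<in> E'} = nbrs_in E A v"
    and outside: "\<forall>v\<in>{0..<n} - A. \<forall>w\<in>{0..<n} - A. v \<noteq> w \<longrightarrow> ({v, w} \<in> E \<longleftrightarrow> {f v, f w} \<in> E')"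
  shows "graph_iso ({0..<n}, E) ({0..<n}, E')"
proof -
  have mixed: "{u, v} \<in> E \<longleftrightarrow> {f u, f v} \<in> E'" if "u \<in> A" "v \<in> {0..<n} - A" for u v
  proof -
    have "{u, v} \<in> E \<longleftrightarrow> u \<in> nbrs_in E A v"
      using that by (simp add: nbrs_in_def)
    also have "\<dots> \<longleftrightarrow> {\<phi> u, f v} \<in> E'"
      using nbrs that by blast
    finally show ?thesis
      using f(2) that by simp
  qed
  have "{x, y} \<in> E \<longleftrightarrow> {f x, f y} \<in> E'" if xy: "x \<in> {0..<n}" "y \<in> {0..<n}" for x y
  proof -
    consider "x = y" | "x \<in> A" "y \<in> A" | "x \<in> A" "y \<in> {0..<n} - A" | "x \<in> {0..<n} - A" "y \<in> A"
      | "x \<in> {0..<n} - A" "y \<in> {0..<n} - A" "x \<noteq> y"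
      using xy by blast
    then show ?thesis
    proof cases
      case 1
      then show ?thesis
        using E by (auto simp: graphs_on_def)
    next
      case 2
      then show ?thesis
        using \<phi> f(2) by simp
    next
      case 3
      then show ?thesis
        by (rule mixed)
    next
      case 4
      then show ?thesis
        using mixed by (metis insert_commute)
    next
      case 5
      then show ?thesis
        using outside by blast
    qed
  qed
  then show ?thesis
    using f(1) unfolding graph_iso_def by auto
qed

lemma graph_iso_if_local_extensions:
  assumes E: "E \<in> graphs_on n" "E' \<in> graphs_on n"
    and A: "A \<subseteq> {0..<n}" "A' \<subseteq> {0..<n}" "card A' = card A" "card A + 2 \<le> n"
    and \<phi>: "bij_betw \<phi> A A'" "\<forall>u\<in>A. \<forall>v\<in>A. {u, v} \<in> E \<longleftrightarrow> {\<phi> u, \<phi> v} \<in> E'"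
    and dist: "distinguishing n E A"
    and local: "\<And>v w. v \<in> {0..<n} - A \<Longrightarrow> w \<in> {0..<n} - A \<Longrightarrow> v \<noteq> w \<Longrightarrow>
       \<exists>g. g ` {v, w} \<subseteq> {0..<n} - A' \<and> (\<forall>u\<in>A. g u = \<phi> u) \<and>
           (\<forall>x\<in>A \<union> {v, w}. \<forall>y\<in>A \<union> {v, w}. {x, y} \<in> E \<longleftrightarrow> {g x, g y} \<in> E')"
  shows "graph_iso ({0..<n}, E) ({0..<n}, E')"
proof -
  define V where "V = {0..<n}"
  note local = local[folded V_def]
  define c' where "c' y = {u \<in> A. {\<phi> u, y} \<in> E'}" for y
  have code: "c' (g x) = nbrs_in E A x"
    if "\<forall>u\<in>A. g u = \<phi> u" and "\<forall>x'\<in>A \<union> {v, w}. \<forall>y\<in>A \<union> {v, w}. {x', y} \<in> E \<longleftrightarrow> {g x', g y} \<in> E'"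
      and "x \<in> {v, w}" for g v w x
    using that unfolding c'_def nbrs_in_def by auto
  have card_out: "card (V - A') = card (V - A)"
    using A by (simp add: V_def card_Diff_subset finite_subset)
  have cover: "nbrs_in E A ` (V - A) \<subseteq> c' ` (V - A')"
  proof (rule image_subsetI)
    fix v assume v: "v \<in> V - A"
    have "card (V - A - {v}) \<noteq> 0"
      using A(1,4) v by (simp add: V_def card_Diff_subset finite_subset)
    then obtain w where w: "w \<in> V - A" "w \<noteq> v"
      by (metis card.empty Diff_iff equals0I insertCI)
    obtain g where g: "g ` {v, w} \<subseteq> V - A'" "\<forall>u\<in>A. g u = \<phi> u"
      "\<forall>x\<in>A \<union> {v, w}. \<forall>y\<in>A \<union> {v, w}. {x, y} \<in> E \<longleftrightarrow> {g x, g y} \<in> E'"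
      using local[OF v w(1) w(2)[symmetric]] by blast
    then have "g v \<in> V - A'" and "c' (g v) = nbrs_in E A v"
      using code[OF g(2,3)] by auto
    then show "nbrs_in E A v \<in> c' ` (V - A')"
      by (metis image_eqI)
  qed
  have c'_inj: "inj_on c' (V - A')"
    using inj_on_image_eq_if_covers[of "V - A'" "V - A" "nbrs_in E A" c'] cover dist card_out
    by (simp add: V_def distinguishing_def)
  obtain f where f: "bij_betw f V V" "\<forall>x\<in>A. f x = \<phi> x" "\<forall>v\<in>V - A. f v \<in> V - A' \<and> c' (f v) = nbrs_in E A v"
    using exists_bij_matching_codes[of V A A' \<phi> "nbrs_in E A" c'] A \<phi>(1) dist cover
    by (auto simp: V_def distinguishing_def)
  have "{v, w} \<in> E \<longleftrightarrow> {f v, f w} \<in> E'" if vw: "v \<in> V - A" "w \<in> V - A" "v \<noteq> w" for v w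
  proof -
    obtain g where g: "g ` {v, w} \<subseteq> V - A'" "\<forall>u\<in>A. g u = \<phi> u"
      "\<forall>x\<in>A \<union> {v, w}. \<forall>y\<in>A \<union> {v, w}. {x, y} \<in> E \<longleftrightarrow> {g x, g y} \<in> E'"
      using local[OF vw] by blast
    have "g x = f x" if x: "x \<in> {v, w}" for x
    proof -
      have "x \<in> V - A" and "g x \<in> V - A'"
        using x vw g(1) by auto
      then show ?thesis
        using inj_onD[OF c'_inj] code[OF g(2,3) x] f(3) by metis
    qed
    then show ?thesis
      using g(3) by auto
  qed
  then show ?thesis
    using graph_iso_if_bij_respects_nbrs[OF E f(1,2)[unfolded V_def] \<phi>(2)] f(3)
    by (simp add: V_def c'_def)
qed

lemma reconstructible_if_rigid_distinguishing:
  assumes E: "E \<in> graphs_on n" and A: "A \<subseteq> {0..<n}" and k: "card A + 2 = k" "k \<le> n"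
    and rigid: "rigid n E A" and dist: "distinguishing n E A"
  shows "reconstructible n k E"
  unfolding reconstructible_def
proof (intro ballI impI)
  fix E' assume E': "E' \<in> graphs_on n" and deck: "deck n k E' = deck n k E"
  let ?C = "iso_class (induced E A)"
  have "card (induced_copies (card A) ?C ({0..<n}, E')) = 1"
    using kelly_lemma[OF deck[symmetric], of "card A" ?C] rigid_unique_copy[OF A rigid] k by simp
  then obtain A' where A': "induced_copies (card A) ?C ({0..<n}, E') = {A'}"
    by (rule card_1_singletonE)
  then have A'_sub: "A' \<subseteq> {0..<n}" "card A' = card A"
    and "graph_iso (induced E A) (induced E' A')"
    by (auto simp: induced_copies_def iso_class_eq_iff[symmetric])
  then obtain \<phi> where \<phi>: "bij_betw \<phi> A A'" "\<forall>u\<in>A. \<forall>v\<in>A. {u, v} \<in> E \<longleftrightarrow> {\<phi> u, \<phi> v} \<in> E'"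
    unfolding graph_iso_induced_iff by blast
  have "graph_iso ({0..<n}, E) ({0..<n}, E')"
  proof (rule graph_iso_if_local_extensions[OF E E' A A'_sub _ \<phi> dist])
    show "card A + 2 \<le> n"
      using k by simp
    fix v w assume v: "v \<in> {0..<n} - A" and w: "w \<in> {0..<n} - A" and "v \<noteq> w"
    have "finite A"
      using A finite_subset by blast
    then have S: "A \<subseteq> A \<union> {v, w}" "A \<union> {v, w} \<subseteq> {0..<n}" "card (A \<union> {v, w}) = k"
      using v w \<open>v \<noteq> w\<close> A k by auto
    obtain g where "g ` (A \<union> {v, w} - A) \<subseteq> {0..<n} - A'" "\<forall>u\<in>A. g u = \<phi> u"
      "\<forall>x\<in>A \<union> {v, w}. \<forall>y\<in>A \<union> {v, w}. {x, y} \<in> E \<longleftrightarrow> {g x, g y} \<in> E'"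
      by (rule same_deck_extends_copy_iso[OF deck A rigid A' \<phi> S])
    moreover have "A \<union> {v, w} - A = {v, w}"
      using v w by auto
    ultimately show "\<exists>g. g ` {v, w} \<subseteq> {0..<n} - A' \<and> (\<forall>u\<in>A. g u = \<phi> u) \<and>
        (\<forall>x\<in>A \<union> {v, w}. \<forall>y\<in>A \<union> {v, w}. {x, y} \<in> E \<longleftrightarrow> {g x, g y} \<in> E')"
      by auto
  qed
  then show "graph_iso ({0..<n}, E') ({0..<n}, E)"
    by (rule graph_iso_sym)
qed

section \<open>Counting graphs on which a map preserves adjacency\<close>

definition pairs :: "nat \<Rightarrow> nat set set" where
  "pairs n = {e. e \<subseteq> {0..<n} \<and> card e = 2}"

lemma finite_pairs [simp]: "finite (pairs n)"
  unfolding pairs_def by (rule finite_subset[of _ "Pow {0..<n}"]) auto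

lemma graphs_on_eq_Pow: "graphs_on n = Pow (pairs n)"
  unfolding graphs_on_def pairs_def by auto

text \<open>Membership of \<open>\<pi> q\<close> is forced by that of \<open>q\<close>, so \<open>E\<close> is determined by \<open>E - \<pi> ` Q\<close>.\<close>
lemma card_Pow_respecting_injection:
  assumes P: "finite P" and Q: "Q \<subseteq> P" and \<pi>Q: "\<pi> ` Q \<subseteq> P" and inj: "inj_on \<pi> Q"
    and disj: "Q \<inter> \<pi> ` Q = {}"
  shows "card {E \<in> Pow P. \<forall>q\<in>Q. q \<in> E \<longleftrightarrow> \<pi> q \<in> E} = 2 ^ (card P - card Q)"
proof -
  let ?L = "{E \<in> Pow P. \<forall>q\<in>Q. q \<in> E \<longleftrightarrow> \<pi> q \<in> E}"
  have "bij_betw (\<lambda>E. E - \<pi> ` Q) ?L (Pow (P - \<pi> ` Q))"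
  proof (rule bij_betwI[where g = "\<lambda>F. F \<union> \<pi> ` (F \<inter> Q)"])
    show "(\<lambda>F. F \<union> \<pi> ` (F \<inter> Q)) \<in> Pow (P - \<pi> ` Q) \<rightarrow> ?L"
    proof
      fix F assume F: "F \<in> Pow (P - \<pi> ` Q)"
      have "q \<in> F \<union> \<pi> ` (F \<inter> Q) \<longleftrightarrow> \<pi> q \<in> F \<union> \<pi> ` (F \<inter> Q)" if "q \<in> Q" for q
        using that F disj inj_onD[OF inj] by blast
      then show "F \<union> \<pi> ` (F \<inter> Q) \<in> ?L"
        using F \<pi>Q by blast
    qed
    show "(E - \<pi> ` Q) \<union> \<pi> ` ((E - \<pi> ` Q) \<inter> Q) = E" if "E \<in> ?L" for E
    proof -
      have "(E - \<pi> ` Q) \<inter> Q = E \<inter> Q" and "\<pi> ` (E \<inter> Q) = E \<inter> \<pi> ` Q"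
        using that disj by blast+
      then show ?thesis
        by blast
    qed
  qed auto
  then have "card ?L = 2 ^ card (P - \<pi> ` Q)"
    using P by (simp add: bij_betw_same_card card_Pow)
  also have "card (P - \<pi> ` Q) = card P - card Q"
    using P \<pi>Q card_image[OF inj] by (simp add: card_Diff_subset finite_subset)
  finally show ?thesis .
qed

lemma real_two_pow_diff: "q \<le> N \<Longrightarrow> real ((2::nat) ^ (N - q)) = 2 ^ N * 2 powr (- real q)"
  by (simp add: powr_realpow[symmetric] of_nat_diff powr_diff powr_minus divide_inverse)

definition displaced_pairs :: "(nat \<Rightarrow> nat) \<Rightarrow> nat set \<Rightarrow> nat set set \<Rightarrow> bool" where
  "displaced_pairs \<psi> A Q \<longleftrightarrow> Q \<subseteq> {e. e \<subseteq> A \<and> card e = 2} \<and> Q \<inter> image \<psi> ` Q = {}"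

lemma card_graphs_respecting_pair_map:
  assumes B: "B \<subseteq> {0..<n}" and inj: "inj_on \<psi> B" and \<psi>B: "\<psi> ` B \<subseteq> {0..<n}"
    and Q: "displaced_pairs \<psi> B Q"
  shows "real (card {E \<in> Pow (pairs n). \<forall>q\<in>Q. q \<in> E \<longleftrightarrow> \<psi> ` q \<in> E})
           = 2 ^ card (pairs n) * 2 powr (- real (card Q))"
proof -
  have Q_pairs: "Q \<subseteq> pairs n"
    using Q B unfolding displaced_pairs_def pairs_def by auto
  have "image \<psi> ` Q \<subseteq> pairs n"
  proof
    fix X assume "X \<in> image \<psi> ` Q"
    then obtain q where q: "q \<in> Q" "X = \<psi> ` q"
      by blast
    moreover have "q \<subseteq> B" and "card q = 2"
      using q Q by (auto simp: displaced_pairs_def)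
    ultimately have "card X = 2"
      using card_image[OF inj_on_subset[OF inj]] by metis
    moreover have "X \<subseteq> {0..<n}"
      using q Q \<psi>B by (auto simp: displaced_pairs_def)
    ultimately show "X \<in> pairs n"
      unfolding pairs_def by simp
  qed
  moreover have "inj_on (image \<psi>) Q"
    by (rule inj_on_subset[OF inj_on_image_Pow[OF inj]]) (use Q in \<open>auto simp: displaced_pairs_def\<close>)
  ultimately have "card {E \<in> Pow (pairs n). \<forall>q\<in>Q. q \<in> E \<longleftrightarrow> \<psi> ` q \<in> E} = 2 ^ (card (pairs n) - card Q)"
    using Q Q_pairs by (intro card_Pow_respecting_injection) (auto simp: displaced_pairs_def)
  then show ?thesis
    using real_two_pow_diff[OF card_mono[OF finite_pairs Q_pairs]] by simp
qed

lemma card_preserves_adj_le: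
  assumes "A \<subseteq> {0..<n}" and "inj_on \<psi> A" and "\<psi> ` A \<subseteq> {0..<n}" and Q: "displaced_pairs \<psi> A Q"
  shows "real (card {E \<in> Pow (pairs n). preserves_adj E A \<psi>})
           \<le> 2 ^ card (pairs n) * 2 powr (- real (card Q))"
proof -
  have "q \<in> E \<longleftrightarrow> \<psi> ` q \<in> E" if "preserves_adj E A \<psi>" "q \<in> Q" for E q
  proof -
    obtain u v where "q = {u, v}" "u \<noteq> v" "u \<in> A" "v \<in> A"
      using Q \<open>q \<in> Q\<close> by (auto simp: displaced_pairs_def card_2_iff)
    then show ?thesis
      using that(1) unfolding preserves_adj_def by auto
  qed
  then have "card {E \<in> Pow (pairs n). preserves_adj E A \<psi>}
      \<le> card {E \<in> Pow (pairs n). \<forall>q\<in>Q. q \<in> E \<longleftrightarrow> \<psi> ` q \<in> E}"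
    by (intro card_mono) auto
  then show ?thesis
    using card_graphs_respecting_pair_map[OF assms] by linarith
qed

lemma card_ordered_pairs_le:
  assumes "card e = 2"
  shows "card {(u, w). u \<in> e \<and> w \<in> e \<and> u \<noteq> w} \<le> 2"
proof -
  obtain x y where "e = {x, y}" "x \<noteq> y"
    using assms by (auto simp: card_2_iff)
  then have "{(u, w). u \<in> e \<and> w \<in> e \<and> u \<noteq> w} = {(x, y), (y, x)}"
    by auto
  then show ?thesis
    using card_insert_le_m1[of 2 "{(y, x)}" "(x, y)"] by simp
qed

lemma displaced_pairs_leaving:
  assumes fin: "finite A"
  shows "\<exists>Q. displaced_pairs \<psi> A Q \<and> card {u\<in>A. \<psi> u \<notin> A} * (card A - 1) \<le> 2 * card Q"
proof -
  define M where "M = {u\<in>A. \<psi> u \<notin> A}"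
  define Q where "Q = {e. e \<subseteq> A \<and> card e = 2 \<and> e \<inter> M \<noteq> {}}"
  let ?ord = "\<lambda>e. {(u, w). u \<in> e \<and> w \<in> e \<and> u \<noteq> w}"
  have "displaced_pairs \<psi> A Q"
    unfolding displaced_pairs_def Q_def M_def by blast
  have fin_Q: "finite Q"
    unfolding Q_def by (rule finite_subset[of _ "Pow A"]) (use fin in auto)
  have "card (SIGMA u:M. A - {u}) = (\<Sum>u\<in>M. card (A - {u}))"
    using fin by (simp add: card_SigmaI M_def)
  also have "\<dots> = card M * (card A - 1)"
    using fin by (simp add: M_def)
  finally have "card M * (card A - 1) = card (SIGMA u:M. A - {u})" ..
  also have "\<dots> \<le> card (\<Union>e\<in>Q. ?ord e)"
  proof (rule card_mono)
    show "finite (\<Union>e\<in>Q. ?ord e)"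
      by (rule finite_subset[of _ "A \<times> A"]) (use fin in \<open>auto simp: Q_def\<close>)
    show "(SIGMA u:M. A - {u}) \<subseteq> (\<Union>e\<in>Q. ?ord e)"
    proof
      fix p assume "p \<in> (SIGMA u:M. A - {u})"
      then obtain u w where "p = (u, w)" "u \<in> M" "w \<in> A" "w \<noteq> u"
        by auto
      moreover have "{u, w} \<in> Q"
        using calculation unfolding Q_def M_def by auto
      ultimately show "p \<in> (\<Union>e\<in>Q. ?ord e)"
        by blast
    qed
  qed
  also have "\<dots> \<le> (\<Sum>e\<in>Q. card (?ord e))"
    by (rule card_UN_le[OF fin_Q])
  also have "\<dots> \<le> (\<Sum>e\<in>Q. 2)"
    by (rule sum_mono) (auto simp: Q_def intro: card_ordered_pairs_le)
  finally show ?thesis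
    using \<open>displaced_pairs \<psi> A Q\<close> unfolding M_def by auto
qed

lemma exists_subset_disjoint_from_image:
  assumes "finite M" and "inj_on \<psi> M" and "\<forall>x\<in>M. \<psi> x \<noteq> x"
  shows "\<exists>M0\<subseteq>M. \<psi> ` M0 \<inter> M0 = {} \<and> card M \<le> 3 * card M0"
  using assms
proof (induction "card M" arbitrary: M rule: less_induct)
  case less
  show ?case
  proof (cases "M = {}")
    case True
    then show ?thesis
      by auto
  next
    case False
    then obtain u where u: "u \<in> M"
      by blast
    define R where "R = {x\<in>M. \<psi> x = u}"
    define M' where "M' = M - {u} - {\<psi> u} - R"
    have "card R \<le> 1"
    proof -
      have "finite R"
        using less.prems(1) unfolding R_def by simp
      moreover have "\<forall>x\<in>R. \<forall>y\<in>R. x = y"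
        using inj_onD[OF less.prems(2)] unfolding R_def by auto
      ultimately show ?thesis
        using card_le_Suc0_iff_eq by (metis One_nat_def)
    qed
    moreover have "card M \<le> card M' + card {u, \<psi> u} + card R"
    proof -
      have "card M \<le> card (M' \<union> ({u, \<psi> u} \<union> R))"
        using less.prems(1) by (intro card_mono) (auto simp: M'_def R_def)
      also have "\<dots> \<le> card M' + card ({u, \<psi> u} \<union> R)"
        by (rule card_Un_le)
      finally show ?thesis
        using card_Un_le[of "{u, \<psi> u}" R] by linarith
    qed
    moreover have "card {u, \<psi> u} \<le> 2"
      by (simp add: card_insert_if)
    ultimately have card_M: "card M \<le> card M' + 3"
      by linarith
    have "M' \<subset> M"
      using u by (auto simp: M'_def)
    then have "M' \<subseteq> M" and "card M' < card M"
      using psubset_card_mono[OF less.prems(1)] by auto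
    moreover have "finite M'" and "inj_on \<psi> M'" and "\<forall>x\<in>M'. \<psi> x \<noteq> x"
      using \<open>M' \<subseteq> M\<close> less.prems by (auto intro: finite_subset inj_on_subset)
    ultimately obtain M0' where M0': "M0' \<subseteq> M'" "\<psi> ` M0' \<inter> M0' = {}" "card M' \<le> 3 * card M0'"
      using less.hyps[of M'] by blast
    have "u \<notin> M0'" and "\<psi> u \<notin> M0'" and "\<forall>x\<in>M0'. \<psi> x \<noteq> u"
      using M0'(1) unfolding M'_def R_def by auto
    then have "\<psi> ` insert u M0' \<inter> insert u M0' = {}"
      using M0'(2) u less.prems(3) by auto
    moreover have "card (insert u M0') = card M0' + 1"
      using \<open>u \<notin> M0'\<close> finite_subset[OF M0'(1) \<open>finite M'\<close>] by simp
    ultimately show ?thesis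
      using card_M M0' u \<open>M' \<subseteq> M\<close> by (intro exI[of _ "insert u M0'"]) auto
  qed
qed

lemma displaced_pairs_across:
  assumes fin: "finite A" and inj: "inj_on \<psi> A"
    and M: "M \<subseteq> A" "\<psi> ` M \<inter> M = {}" "4 * card M \<le> card A"
  shows "\<exists>Q. displaced_pairs \<psi> A Q \<and> card M * card A \<le> 2 * card Q"
proof -
  define W where "W = {w\<in>A. w \<notin> M \<and> \<psi> w \<notin> M}"
  define Q where "Q = (\<lambda>(u, w). {u, w}) ` (M \<times> W)"
  have fin_M: "finite M" and fin_W: "finite W"
    using fin M(1) finite_subset unfolding W_def by auto
  have "inj_on (\<lambda>(u, w). {u, w}) (M \<times> W)"
    by (auto simp: inj_on_def W_def doubleton_eq_iff)
  then have card_Q: "card Q = card M * card W"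
    unfolding Q_def by (simp add: card_image card_cartesian_product)
  have "card {w\<in>A. \<psi> w \<in> M} \<le> card M"
    using fin_M inj by (intro card_inj_on_le) (auto intro: inj_on_subset)
  moreover have "card A \<le> card W + card M + card {w\<in>A. \<psi> w \<in> M}"
  proof -
    have "card A \<le> card (W \<union> M \<union> {w\<in>A. \<psi> w \<in> M})"
      using fin fin_M fin_W by (intro card_mono) (auto simp: W_def)
    then show ?thesis
      using card_Un_le[of "W \<union> M" "{w\<in>A. \<psi> w \<in> M}"] card_Un_le[of W M] by linarith
  qed
  ultimately have "card A \<le> 2 * card W"
    using M(3) by linarith
  then have "card M * card A \<le> 2 * card Q"
    using card_Q by (simp add: mult_le_mono)
  moreover have "displaced_pairs \<psi> A Q"
    unfolding displaced_pairs_def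
  proof
    show "Q \<subseteq> {e. e \<subseteq> A \<and> card e = 2}"
      using M(1) by (auto simp: Q_def W_def card_insert_if)
    have "e \<inter> M \<noteq> {}" and "\<psi> ` e \<inter> M = {}" if "e \<in> Q" for e
      using that M(2) by (auto simp: Q_def W_def)
    then show "Q \<inter> image \<psi> ` Q = {}"
      by blast
  qed
  ultimately show ?thesis
    by blast
qed

lemma displaced_pairs_moved:
  assumes fin: "finite A" and inj: "inj_on \<psi> A" and A4: "4 \<le> card A"
  shows "\<exists>Q. displaced_pairs \<psi> A Q \<and> card {u\<in>A. \<psi> u \<noteq> u} * card A \<le> 16 * card Q"
proof -
  define M where "M = {u\<in>A. \<psi> u \<noteq> u}"
  have "M \<subseteq> A" and "finite M" and "\<forall>x\<in>M. \<psi> x \<noteq> x"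
    using fin by (auto simp: M_def)
  then obtain M0 where M0: "M0 \<subseteq> M" "\<psi> ` M0 \<inter> M0 = {}" "card M \<le> 3 * card M0"
    using exists_subset_disjoint_from_image[of M \<psi>] inj_on_subset[OF inj] by blast
  obtain M1 where M1: "M1 \<subseteq> M0" "card M1 = min (card M0) (card A div 4)"
    using obtain_subset_with_card_n[of "min (card M0) (card A div 4)" M0] by auto
  have "card M \<le> 8 * card M1"
  proof (cases "card M0 \<le> card A div 4")
    case True
    then show ?thesis
      using M0(3) M1(2) by simp
  next
    case False
    then have "card M1 = card A div 4"
      using M1(2) by simp
    moreover have "card A \<le> 8 * (card A div 4)"
      using A4 by presburger
    ultimately show ?thesis
      using card_mono[OF fin \<open>M \<subseteq> A\<close>] by linarith
  qed
  have "M1 \<subseteq> A" and "\<psi> ` M1 \<inter> M1 = {}"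
    using M0 M1(1) \<open>M \<subseteq> A\<close> by blast+
  moreover have "4 * card M1 \<le> card A"
  proof -
    have "4 * (card A div 4) \<le> card A"
      by presburger
    moreover have "card M1 \<le> card A div 4"
      using M1(2) by simp
    ultimately show ?thesis
      by linarith
  qed
  ultimately obtain Q where Q: "displaced_pairs \<psi> A Q" "card M1 * card A \<le> 2 * card Q"
    using displaced_pairs_across[OF fin inj] by blast
  have "card M * card A \<le> 8 * (card M1 * card A)"
    using \<open>card M \<le> 8 * card M1\<close> by (simp add: mult_le_mono1)
  also have "\<dots> \<le> 16 * card Q"
    using mult_le_mono2[OF Q(2), of 8] by simp
  finally have "card M * card A \<le> 16 * card Q" .
  then show ?thesis
    using Q(1) unfolding M_def by blast
qed

lemma card_preserves_adj_le_powr: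
  assumes A: "A \<subseteq> {0..<n}" "4 \<le> card A" and inj: "inj_on \<psi> A" and \<psi>A: "\<psi> ` A \<subseteq> {0..<n}"
  shows "real (card {E \<in> Pow (pairs n). preserves_adj E A \<psi>}) \<le> 2 ^ card (pairs n) *
     2 powr (- (2 * (real (card A) - 1) / 5 * real (card {u\<in>A. \<psi> u \<notin> A})
                + real (card A) / 80 * real (card {u\<in>A. \<psi> u \<noteq> u})))"
proof -
  have fin: "finite A"
    using A(1) finite_subset by blast
  obtain Q1 where Q1: "displaced_pairs \<psi> A Q1"
    "card {u\<in>A. \<psi> u \<notin> A} * (card A - 1) \<le> 2 * card Q1"
    using displaced_pairs_leaving[OF fin] by blast
  obtain Q2 where Q2: "displaced_pairs \<psi> A Q2"
    "card {u\<in>A. \<psi> u \<noteq> u} * card A \<le> 16 * card Q2"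
    using displaced_pairs_moved[OF fin inj A(2)] by blast
  define q where "q = max (card Q1) (card Q2)"
  define e where "e = 2 * (real (card A) - 1) / 5 * real (card {u\<in>A. \<psi> u \<notin> A})
                       + real (card A) / 80 * real (card {u\<in>A. \<psi> u \<noteq> u})"
  have "real (card {E \<in> Pow (pairs n). preserves_adj E A \<psi>}) \<le> 2 ^ card (pairs n) * 2 powr (- real q)"
  proof (cases "card Q1 \<le> card Q2")
    case True
    then show ?thesis
      using card_preserves_adj_le[OF A(1) inj \<psi>A Q2(1)] by (simp add: q_def)
  next
    case False
    then show ?thesis
      using card_preserves_adj_le[OF A(1) inj \<psi>A Q1(1)] by (simp add: q_def)
  qed
  also have "\<dots> \<le> 2 ^ card (pairs n) * 2 powr (- e)"
  proof -
    have "real (card {u\<in>A. \<psi> u \<notin> A} * (card A - 1)) \<le> real (2 * card Q1)"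
      and "real (card {u\<in>A. \<psi> u \<noteq> u} * card A) \<le> real (16 * card Q2)"
      using Q1(2) Q2(2) by (simp_all only: of_nat_le_iff)
    then have "real (card {u\<in>A. \<psi> u \<notin> A}) * (real (card A) - 1) \<le> 2 * real (card Q1)"
      and "real (card {u\<in>A. \<psi> u \<noteq> u}) * real (card A) \<le> 16 * real (card Q2)"
      using A(2) by (simp_all add: of_nat_diff)
    moreover have "real (card Q1) \<le> real q" and "real (card Q2) \<le> real q"
      by (simp_all add: q_def)
    ultimately have "e \<le> real q"
      unfolding e_def by (simp add: field_simps)
    then show ?thesis
      by (intro mult_left_mono) simp_all
  qed
  finally show ?thesis
    unfolding e_def .
qed

section \<open>Rigid distinguishing sets are typical\<close>

lemma sum_PiE_nonidentity_prod:
  fixes w :: "'a \<Rightarrow> 'a \<Rightarrow> real"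
  assumes "finite A" and "finite B" and "A \<subseteq> B" and "\<And>u. u \<in> A \<Longrightarrow> w u u = 1"
  shows "(\<Sum>\<psi>\<in>PiE A (\<lambda>_. B) - {restrict id A}. \<Prod>u\<in>A. w u (\<psi> u)) = (\<Prod>u\<in>A. \<Sum>x\<in>B. w u x) - 1"
proof -
  have "restrict id A \<in> PiE A (\<lambda>_. B)"
    using assms(3) by auto
  moreover have "(\<Prod>u\<in>A. w u (restrict id A u)) = 1"
    using assms(4) by simp
  ultimately have "(\<Sum>\<psi>\<in>PiE A (\<lambda>_. B) - {restrict id A}. \<Prod>u\<in>A. w u (\<psi> u))
      = (\<Sum>\<psi>\<in>PiE A (\<lambda>_. B). \<Prod>u\<in>A. w u (\<psi> u)) - 1"
    using assms(1,2) by (simp add: sum_diff1 finite_PiE)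
  also have "(\<Sum>\<psi>\<in>PiE A (\<lambda>_. B). \<Prod>u\<in>A. w u (\<psi> u)) = (\<Prod>u\<in>A. \<Sum>x\<in>B. w u x)"
    using assms(1,2) by (simp add: prod_sum_PiE)
  finally show ?thesis .
qed

definition move_weight :: "nat set \<Rightarrow> real \<Rightarrow> real \<Rightarrow> nat \<Rightarrow> nat \<Rightarrow> real" where
  "move_weight A c1 c2 u x = 2 powr (- ((if x \<notin> A then c1 else 0) + (if x \<noteq> u then c2 else 0)))"

lemma prod_move_weight:
  assumes "finite A"
  shows "(\<Prod>u\<in>A. move_weight A c1 c2 u (\<psi> u)) =
    2 powr (- (c1 * real (card {u\<in>A. \<psi> u \<notin> A}) + c2 * real (card {u\<in>A. \<psi> u \<noteq> u})))"
proof -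
  have "(\<Prod>u\<in>A. move_weight A c1 c2 u (\<psi> u))
      = 2 powr (\<Sum>u\<in>A. - ((if \<psi> u \<notin> A then c1 else 0) + (if \<psi> u \<noteq> u then c2 else 0)))"
    unfolding move_weight_def by (simp add: powr_sum)
  also have "(\<Sum>u\<in>A. - ((if \<psi> u \<notin> A then c1 else 0) + (if \<psi> u \<noteq> u then c2 else 0)))
      = - ((\<Sum>u\<in>A. if \<psi> u \<notin> A then c1 else 0) + (\<Sum>u\<in>A. if \<psi> u \<noteq> u then c2 else 0))"
    by (simp only: sum_negf[symmetric] sum.distrib[symmetric])
  also have "\<dots> = - (c1 * real (card {u\<in>A. \<psi> u \<notin> A}) + c2 * real (card {u\<in>A. \<psi> u \<noteq> u}))"
    using assms by (simp add: sum.If_cases Int_def)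
  finally show ?thesis .
qed

lemma sum_move_weight_le:
  assumes "A \<subseteq> {0..<n}" and "u \<in> A"
  shows "(\<Sum>x\<in>{0..<n}. move_weight A c1 c2 u x)
           \<le> 1 + real (card A) * 2 powr (- c2) + real n * 2 powr (- (c1 + c2))"
proof -
  have "(\<Sum>x\<in>{0..<n}. move_weight A c1 c2 u x)
      \<le> (\<Sum>x\<in>{0..<n}. (if x = u then 1 else 0) + (if x \<in> A then 2 powr (- c2) else 0) + 2 powr (- (c1 + c2)))"
    using assms(2) by (intro sum_mono) (auto simp: move_weight_def)
  also have "\<dots> = 1 + real (card A) * 2 powr (- c2) + real n * 2 powr (- (c1 + c2))"
    using assms by (simp add: sum.distrib sum.If_cases Int_absorb1 Int_def[symmetric] subset_iff)
  finally show ?thesis .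
qed

definition nonrigid_bound :: "nat \<Rightarrow> nat \<Rightarrow> real" where
  "nonrigid_bound n a = (1 + real a * 2 powr (- (real a / 80))
                          + real n * 2 powr (- (2 * (real a - 1) / 5 + real a / 80))) ^ a - 1"

lemma not_rigid_subset_UN_preserves_adj:
  "{E \<in> Pow (pairs n). \<not> rigid n E A} \<subseteq>
     (\<Union>\<psi>\<in>{\<psi> \<in> PiE A (\<lambda>_. {0..<n}) - {restrict id A}. inj_on \<psi> A}. {E \<in> Pow (pairs n). preserves_adj E A \<psi>})"
proof
  fix E assume "E \<in> {E \<in> Pow (pairs n). \<not> rigid n E A}"
  then obtain \<psi> where E: "E \<in> Pow (pairs n)" and \<psi>: "\<psi> ` A \<subseteq> {0..<n}" "inj_on \<psi> A"
    "preserves_adj E A \<psi>" "\<exists>u\<in>A. \<psi> u \<noteq> u"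
    unfolding rigid_def by blast
  have "restrict \<psi> A \<in> {\<psi> \<in> PiE A (\<lambda>_. {0..<n}) - {restrict id A}. inj_on \<psi> A}"
    using \<psi> by (auto simp: inj_on_def fun_eq_iff)
  moreover have "preserves_adj E A (restrict \<psi> A)"
    using \<psi>(3) by (simp add: preserves_adj_def)
  ultimately show "E \<in> (\<Union>\<psi>\<in>{\<psi> \<in> PiE A (\<lambda>_. {0..<n}) - {restrict id A}. inj_on \<psi> A}.
      {E \<in> Pow (pairs n). preserves_adj E A \<psi>})"
    using E by blast
qed

text \<open>Summing the bound of \<open>card_preserves_adj_le_powr\<close>, a product over \<open>A\<close>, over all maps
  \<open>A \<rightarrow> {0..<n}\<close> factorises.\<close>
lemma card_not_rigid_le:
  assumes A: "A \<subseteq> {0..<n}" "4 \<le> card A"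
  shows "real (card {E \<in> Pow (pairs n). \<not> rigid n E A}) \<le> 2 ^ card (pairs n) * nonrigid_bound n (card A)"
proof -
  define a where "a = card A"
  define c1 where "c1 = 2 * (real a - 1) / 5"
  define c2 where "c2 = real a / 80"
  define F where "F = PiE A (\<lambda>_. {0..<n})"
  define \<Psi> where "\<Psi> = {\<psi> \<in> F - {restrict id A}. inj_on \<psi> A}"
  define w where "w \<psi> = (\<Prod>u\<in>A. move_weight A c1 c2 u (\<psi> u))" for \<psi>
  have fin_A: "finite A"
    using A(1) finite_subset by blast
  then have fin: "finite F" "finite \<Psi>"
    by (simp_all add: F_def \<Psi>_def finite_PiE)
  have "card {E \<in> Pow (pairs n). \<not> rigid n E A}
      \<le> card (\<Union>\<psi>\<in>\<Psi>. {E \<in> Pow (pairs n). preserves_adj E A \<psi>})"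
    using fin(2) not_rigid_subset_UN_preserves_adj[of n A] by (intro card_mono) (auto simp: \<Psi>_def F_def)
  also have "\<dots> \<le> (\<Sum>\<psi>\<in>\<Psi>. card {E \<in> Pow (pairs n). preserves_adj E A \<psi>})"
    by (rule card_UN_le[OF fin(2)])
  finally have "real (card {E \<in> Pow (pairs n). \<not> rigid n E A})
      \<le> (\<Sum>\<psi>\<in>\<Psi>. real (card {E \<in> Pow (pairs n). preserves_adj E A \<psi>}))"
    by (simp only: of_nat_sum[symmetric] of_nat_le_iff)
  also have "\<dots> \<le> (\<Sum>\<psi>\<in>\<Psi>. 2 ^ card (pairs n) * w \<psi>)"
  proof (rule sum_mono)
    fix \<psi> assume "\<psi> \<in> \<Psi>"
    then have "\<psi> ` A \<subseteq> {0..<n}" and "inj_on \<psi> A"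
      by (auto simp: \<Psi>_def F_def)
    then show "real (card {E \<in> Pow (pairs n). preserves_adj E A \<psi>}) \<le> 2 ^ card (pairs n) * w \<psi>"
      using card_preserves_adj_le_powr[OF A] unfolding w_def prod_move_weight[OF fin_A] a_def c1_def c2_def
      by simp
  qed
  also have "\<dots> \<le> 2 ^ card (pairs n) * (\<Sum>\<psi>\<in>F - {restrict id A}. w \<psi>)"
    unfolding sum_distrib_left[symmetric] using fin(1)
    by (intro mult_left_mono sum_mono2) (auto simp: \<Psi>_def w_def move_weight_def intro: prod_nonneg)
  also have "(\<Sum>\<psi>\<in>F - {restrict id A}. w \<psi>) = (\<Prod>u\<in>A. \<Sum>x\<in>{0..<n}. move_weight A c1 c2 u x) - 1"
    unfolding F_def w_def using fin_A A(1) by (intro sum_PiE_nonidentity_prod) (auto simp: move_weight_def)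
  also have "(\<Prod>u\<in>A. \<Sum>x\<in>{0..<n}. move_weight A c1 c2 u x)
      \<le> (1 + real a * 2 powr (- c2) + real n * 2 powr (- (c1 + c2))) ^ a"
    using sum_move_weight_le[OF A(1)] prod_mono[of A "\<lambda>u. \<Sum>x\<in>{0..<n}. move_weight A c1 c2 u x"
        "\<lambda>_. 1 + real a * 2 powr (- c2) + real n * 2 powr (- (c1 + c2))"]
    by (simp add: a_def sum_nonneg move_weight_def)
  finally show ?thesis
    unfolding nonrigid_bound_def a_def c1_def c2_def by (simp add: mult_left_mono)
qed

lemma card_same_nbrs_in:
  assumes A: "A \<subseteq> {0..<n}" and vw: "v \<in> {0..<n} - A" "w \<in> {0..<n} - A" "v \<noteq> w"
  shows "real (card {E \<in> Pow (pairs n). \<forall>u\<in>A. {u, v} \<in> E \<longleftrightarrow> {u, w} \<in> E})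
           = 2 ^ card (pairs n) * 2 powr (- real (card A))"
proof -
  let ?Q = "(\<lambda>u. {u, v}) ` A"
  have "displaced_pairs (id(v := w)) (insert v A) ?Q"
    unfolding displaced_pairs_def using vw by (auto simp: doubleton_eq_iff card_insert_if)
  moreover have "card ?Q = card A"
    using vw by (intro card_image) (auto simp: inj_on_def doubleton_eq_iff)
  moreover have "insert v A \<subseteq> {0..<n}" and "id(v := w) ` insert v A \<subseteq> {0..<n}"
    and "inj_on (id(v := w)) (insert v A)"
    using vw A by (auto simp: inj_on_def)
  moreover have "id(v := w) ` {u, v} = {u, w}" if "u \<in> A" for u
    using that vw by auto
  ultimately show ?thesis
    using card_graphs_respecting_pair_map[of "insert v A" n "id(v := w)" ?Q] by simp
qed

lemma card_not_distinguishing_le: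
  assumes A: "A \<subseteq> {0..<n}"
  shows "real (card {E \<in> Pow (pairs n). \<not> distinguishing n E A})
           \<le> 2 ^ card (pairs n) * (real n * real n * 2 powr (- real (card A)))"
proof -
  define V where "V = {0..<n}"
  define J where "J = {p \<in> (V - A) \<times> (V - A). fst p \<noteq> snd p}"
  define S where "S p = {E \<in> Pow (pairs n). \<forall>u\<in>A. {u, fst p} \<in> E \<longleftrightarrow> {u, snd p} \<in> E}" for p
  have fin_J: "finite J"
    by (simp add: J_def V_def)
  have cover: "{E \<in> Pow (pairs n). \<not> distinguishing n E A} \<subseteq> (\<Union>p\<in>J. S p)"
  proof
    fix E assume "E \<in> {E \<in> Pow (pairs n). \<not> distinguishing n E A}"
    then obtain v w where E: "E \<in> Pow (pairs n)" and vw: "v \<in> V - A" "w \<in> V - A" "v \<noteq> w"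
      and "nbrs_in E A v = nbrs_in E A w"
      unfolding distinguishing_def inj_on_def V_def by blast
    then have "E \<in> S (v, w)"
      by (auto simp: S_def nbrs_in_def set_eq_iff)
    moreover have "(v, w) \<in> J"
      using vw by (simp add: J_def)
    ultimately show "E \<in> (\<Union>p\<in>J. S p)"
      by blast
  qed
  have "card {E \<in> Pow (pairs n). \<not> distinguishing n E A} \<le> card (\<Union>p\<in>J. S p)"
    using fin_J by (intro card_mono[OF _ cover]) (auto simp: S_def)
  also have "\<dots> \<le> (\<Sum>p\<in>J. card (S p))"
    by (rule card_UN_le[OF fin_J])
  finally have "real (card {E \<in> Pow (pairs n). \<not> distinguishing n E A}) \<le> (\<Sum>p\<in>J. real (card (S p)))"
    by (simp only: of_nat_sum[symmetric] of_nat_le_iff)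
  also have "\<dots> = (\<Sum>p\<in>J. 2 ^ card (pairs n) * 2 powr (- real (card A)))"
  proof (rule sum.cong[OF refl])
    fix p assume "p \<in> J"
    then obtain v w where "p = (v, w)" "v \<in> {0..<n} - A" "w \<in> {0..<n} - A" "v \<noteq> w"
      by (auto simp: J_def V_def)
    then show "real (card (S p)) = 2 ^ card (pairs n) * 2 powr (- real (card A))"
      using card_same_nbrs_in[OF A] by (simp add: S_def)
  qed
  also have "\<dots> = real (card J) * (2 ^ card (pairs n) * 2 powr (- real (card A)))"
    by simp
  also have "\<dots> \<le> real n * real n * (2 ^ card (pairs n) * 2 powr (- real (card A)))"
  proof -
    have "card J \<le> card (V \<times> V)"
      by (intro card_mono) (auto simp: J_def V_def)
    then have "real (card J) \<le> real n * real n"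
      by (metis V_def card_atLeastLessThan card_cartesian_product diff_zero of_nat_mono of_nat_mult)
    then show ?thesis
      by (simp add: mult_right_mono)
  qed
  finally show ?thesis
    by (simp add: algebra_simps)
qed

lemma reconstructible_fraction_ge:
  assumes "4 \<le> a" and "a + 2 \<le> n"
  shows "1 - nonrigid_bound n a - real n * real n * 2 powr (- real a)
           \<le> real (card {E \<in> graphs_on n. reconstructible n (a + 2) E}) / real (card (graphs_on n))"
proof -
  define A where "A = {0..<a}"
  define G where "G = {E \<in> graphs_on n. reconstructible n (a + 2) E}"
  define R where "R = {E \<in> Pow (pairs n). \<not> rigid n E A}"
  define D where "D = {E \<in> Pow (pairs n). \<not> distinguishing n E A}"
  have A: "A \<subseteq> {0..<n}" "card A = a"
    using assms by (auto simp: A_def)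
  have "Pow (pairs n) \<subseteq> G \<union> R \<union> D"
  proof
    fix E assume E: "E \<in> Pow (pairs n)"
    show "E \<in> G \<union> R \<union> D"
    proof (cases "rigid n E A \<and> distinguishing n E A")
      case True
      then have "reconstructible n (a + 2) E"
        using reconstructible_if_rigid_distinguishing[OF _ A(1)] E A(2) assms(2)
        by (simp add: graphs_on_eq_Pow)
      then show ?thesis
        using E by (simp add: G_def graphs_on_eq_Pow)
    next
      case False
      then show ?thesis
        using E by (auto simp: R_def D_def)
    qed
  qed
  moreover have "finite G" and "finite R" and "finite D"
    by (auto simp: G_def R_def D_def graphs_on_eq_Pow)
  ultimately have "card (Pow (pairs n)) \<le> card (G \<union> R \<union> D)"
    by (intro card_mono) auto
  also have "\<dots> \<le> card G + card R + card D"
    using card_Un_le[of "G \<union> R" D] card_Un_le[of G R] by linarith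
  finally have "real (2 ^ card (pairs n)) \<le> real (card G + card R + card D)"
    by (simp only: card_Pow finite_pairs of_nat_le_iff)
  then have "2 ^ card (pairs n) \<le> real (card G) + real (card R) + real (card D)"
    by simp
  moreover have "real (card R) \<le> 2 ^ card (pairs n) * nonrigid_bound n a"
    using card_not_rigid_le[OF A(1)] A(2) assms(1) by (simp add: R_def)
  moreover have "real (card D) \<le> 2 ^ card (pairs n) * (real n * real n * 2 powr (- real a))"
    using card_not_distinguishing_le[OF A(1)] A(2) by (simp add: D_def)
  ultimately have "(1 - nonrigid_bound n a - real n * real n * 2 powr (- real a)) * 2 ^ card (pairs n)
      \<le> real (card G)"
    by (simp add: algebra_simps)
  then show ?thesis
    by (simp add: G_def graphs_on_eq_Pow card_Pow pos_le_divide_eq)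
qed

section \<open>Asymptotics\<close>

lemma two_powr_mult_log:
  assumes "0 < x"
  shows "2 powr (c * log 2 x) = x powr c"
proof -
  have "x powr c = (2 powr log 2 x) powr c"
    using assms by simp
  also have "\<dots> = 2 powr (c * log 2 x)"
    by (simp add: powr_powr mult.commute)
  finally show ?thesis ..
qed

definition nonrigid_majorant :: "nat \<Rightarrow> real" where
  "nonrigid_majorant n = 9 * (log 2 n)\<^sup>2 * 2 powr (1/40) * n powr (-3/80)
                          + 3 * log 2 n * n * 2 powr (49/40) * n powr (-99/80)"

lemma nonrigid_bound_le:
  assumes n: "2 \<le> n" and a: "3 * log 2 n - 2 \<le> real a" "real a \<le> 3 * log 2 n"
  shows "nonrigid_bound n a \<le> exp (nonrigid_majorant n) - 1"
proof -
  define L where "L = log 2 (real n)"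
  define \<beta> where "\<beta> = 2 powr (- (real a / 80))"
  define \<gamma> where "\<gamma> = 2 powr (- (2 * (real a - 1) / 5 + real a / 80))"
  define y where "y = real a * \<beta> + real n * \<gamma>"
  have "0 < real n" and "0 \<le> L"
    using n by (simp_all add: L_def)
  have "\<beta> \<le> 2 powr (1/40 + (-3/80) * L)"
    using a unfolding \<beta>_def L_def by (simp add: field_simps)
  also have "\<dots> = 2 powr (1/40) * real n powr (-3/80)"
    by (simp only: powr_add L_def two_powr_mult_log[OF \<open>0 < real n\<close>])
  finally have \<beta>_le: "\<beta> \<le> 2 powr (1/40) * real n powr (-3/80)" .
  have "\<gamma> \<le> 2 powr (49/40 + (-99/80) * L)"
    using a unfolding \<gamma>_def L_def by (simp add: field_simps)
  also have "\<dots> = 2 powr (49/40) * real n powr (-99/80)"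
    by (simp only: powr_add L_def two_powr_mult_log[OF \<open>0 < real n\<close>])
  finally have \<gamma>_le: "\<gamma> \<le> 2 powr (49/40) * real n powr (-99/80)" .
  have "real a * y = real a * real a * \<beta> + real a * real n * \<gamma>"
    by (simp add: y_def algebra_simps)
  also have "\<dots> \<le> (9 * L\<^sup>2) * (2 powr (1/40) * real n powr (-3/80))
                  + (3 * L * real n) * (2 powr (49/40) * real n powr (-99/80))"
  proof (rule add_mono; rule mult_mono)
    have "real a * real a \<le> (3 * L) * (3 * L)"
      using a(2) by (intro mult_mono) (simp_all add: L_def)
    then show "real a * real a \<le> 9 * L\<^sup>2"
      by (simp add: power2_eq_square)
    show "real a * real n \<le> 3 * L * real n"
      using a by (simp add: L_def mult_right_mono)
  qed (use \<beta>_le \<gamma>_le \<open>0 \<le> L\<close> in \<open>simp_all add: \<beta>_def \<gamma>_def\<close>)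
  also have "\<dots> = nonrigid_majorant n"
    by (simp add: nonrigid_majorant_def L_def algebra_simps)
  finally have "real a * y \<le> nonrigid_majorant n" .
  have "(1 + y) ^ a \<le> exp y ^ a"
    by (rule power_mono) (simp_all add: y_def \<beta>_def \<gamma>_def exp_ge_add_one_self)
  also have "\<dots> = exp (real a * y)"
    by (simp add: exp_of_nat_mult)
  also have "\<dots> \<le> exp (nonrigid_majorant n)"
    using \<open>real a * y \<le> nonrigid_majorant n\<close> by simp
  finally show ?thesis
    by (simp add: nonrigid_bound_def y_def \<beta>_def \<gamma>_def add.assoc)
qed

lemma square_times_two_powr_le:
  assumes n: "0 < n" and a: "3 * log 2 n - 2 \<le> real a"
  shows "real n * real n * 2 powr (- real a) \<le> 4 / real n"
proof -
  have "2 powr (- real a) \<le> 2 powr (2 + (-3) * log 2 n)"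
    using a by simp
  also have "\<dots> = 2 powr 2 * real n powr (-3)"
    using n by (simp only: powr_add two_powr_mult_log of_nat_0_less_iff)
  also have "\<dots> = 4 / real n ^ 3"
    using n by (simp add: powr_minus_divide)
  finally show ?thesis
    using n by (simp add: field_simps power3_eq_cube mult_left_mono)
qed

lemma reconstructible_fraction_ge_log:
  assumes n: "2 \<le> n" and L: "6 \<le> 3 * log 2 (real n)" "3 * log 2 (real n) + 1 \<le> real n"
  shows "1 - (exp (nonrigid_majorant n) - 1) - 4 / real n
           \<le> real (card {E \<in> graphs_on n. reconstructible n (nat \<lceil>3 * log 2 (real n)\<rceil>) E})
              / real (card (graphs_on n))"
proof -
  define k where "k = nat \<lceil>3 * log 2 (real n)\<rceil>"
  define a where "a = k - 2"
  have "3 * log 2 (real n) \<le> real k" and "real k < 3 * log 2 (real n) + 1"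
    using L(1) unfolding k_def by linarith+
  then have "k = a + 2" and "4 \<le> a" and "a + 2 \<le> n"
    and "3 * log 2 n - 2 \<le> real a" and "real a \<le> 3 * log 2 n"
    using L unfolding a_def by linarith+
  then show ?thesis
    using reconstructible_fraction_ge[of a n] nonrigid_bound_le[of n a] square_times_two_powr_le[of n a] n
    unfolding k_def by simp
qed

theorem corollary2:
  shows "(\<lambda>n. real (card {E \<in> graphs_on n.
              reconstructible n (nat \<lceil>3 * log 2 (real n)\<rceil>) E})
            / real (card (graphs_on n))) \<longlonglongrightarrow> 1"
proof (rule tendsto_sandwich[where f = "\<lambda>n. 1 - (exp (nonrigid_majorant n) - 1) - 4 / real n"
                                and h = "\<lambda>_. 1"])
  have "eventually (\<lambda>n::nat. 6 \<le> 3 * log 2 n) sequentially"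
    and "eventually (\<lambda>n::nat. 3 * log 2 n + 1 \<le> n) sequentially"
    by real_asymp+
  then show "eventually (\<lambda>n. 1 - (exp (nonrigid_majorant n) - 1) - 4 / real n \<le>
      real (card {E \<in> graphs_on n. reconstructible n (nat \<lceil>3 * log 2 (real n)\<rceil>) E})
        / real (card (graphs_on n))) sequentially"
    using eventually_ge_at_top[of 2] by eventually_elim (rule reconstructible_fraction_ge_log)
  have "card {E \<in> graphs_on n. reconstructible n (nat \<lceil>3 * log 2 (real n)\<rceil>) E} \<le> card (graphs_on n)"
    for n
    by (intro card_mono) (auto simp: graphs_on_eq_Pow)
  then show "eventually (\<lambda>n. real (card {E \<in> graphs_on n. reconstructible n (nat \<lceil>3 * log 2 (real n)\<rceil>) E})
        / real (card (graphs_on n)) \<le> 1) sequentially"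
    by (intro always_eventually allI) (simp add: divide_le_eq_1 graphs_on_eq_Pow card_Pow)
  show "(\<lambda>n. 1 - (exp (nonrigid_majorant n) - 1) - 4 / real n) \<longlonglongrightarrow> 1"
    unfolding nonrigid_majorant_def by real_asymp
qed simp

end
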